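(* Let $n\ge1$ and $\Lambda\in\widetilde{\mathrm{NC}}^{\mathrm D}(n)$. Then $|\Lambda^+|=2n+2-|\Lambda|$ if $-1$ is the greatest element of its block in $\Lambda$, and $|\Lambda^+|=2n-|\Lambda|$ otherwise, where $|\cdot|$ denotes the number of blocks.
   Context: A set partition of a finite set $\mathcal X\subset\mathbb Z$ is a set of nonempty pairwise disjoint sets (blocks) with union $\mathcal X$. A pair $(i,j)$ is an arc of $\Lambda$ if $i<j$ lie in the same block and $j$ is the least element of that block greater than $i$; $\mathrm{Arc}(\Lambda)$ is the set of arcs. Let $[\pm n]=\{\pm1,\dots,\pm n\}$. $\Pi^{\mathrm D}(n)$ is the set of partitions $\Lambda$ of $[\pm n]$ such that $(i,j)\in\mathrm{Arc}(\Lambda)$ iff $(-j,-i)\in\mathrm{Arc}(\Lambda)$, and $\widetilde{\mathrm{NC}}^{\mathrm D}(n)$ is the set of $\Lambda\in\Pi^{\mathrm D}(n)$ such that whenever $(i,k),(j,l)\in\mathrm{Arc}(\Lambda)$ with $i<j<k<l$, we have $(i,k)=(-l,-j)$. For a partition $\Lambda$ of $\mathcal X$, $\Lambda^+$ is the partition of $\mathcal X$ with arc set $(\mathrm{Arc}(\Lambda)\setminus\mathcal S)\cup\mathcal T$, where $\mathcal S=\{(i,i+1):i\in\mathbb Z\}$ and $\mathcal T$ is the set of pairs $(i,i+1)\in\mathcal X\times\mathcal X$ with $i$ maximal in its block of $\Lambda$ and $i+1$ minimal in its block of $\Lambda$ (note $-1$ and $1$ are not of the form $i,i+1$). *)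

theory Defs
  imports Main "HOL-Library.Disjoint_Sets"
begin

definition arcs :: "int set set \<Rightarrow> (int \<times> int) set" where
  "arcs P = {(i, j). \<exists>B\<in>P. i \<in> B \<and> j \<in> B \<and> i < j \<and> (\<forall>k\<in>B. i < k \<longrightarrow> j \<le> k)}"

definition pm :: "nat \<Rightarrow> int set" where
  "pm n = {i. 1 \<le> \<bar>i\<bar> \<and> \<bar>i\<bar> \<le> int n}"

definition PiD :: "nat \<Rightarrow> int set set set" where
  "PiD n = {P. partition_on (pm n) P \<and> (\<forall>i j. (i, j) \<in> arcs P \<longleftrightarrow> (-j, -i) \<in> arcs P)}"

definition NCD :: "nat \<Rightarrow> int set set set" where
  "NCD n = {P \<in> PiD n. \<forall>i j k l. (i, k) \<in> arcs P \<and> (j, l) \<in> arcs P \<and> i < j \<and> j < k \<and> k < l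
              \<longrightarrow> (i, k) = (-l, -j)}"

definition block_of :: "int set set \<Rightarrow> int \<Rightarrow> int set" where
  "block_of P x = (THE B. B \<in> P \<and> x \<in> B)"

definition S_set :: "(int \<times> int) set" where
  "S_set = {(i, i + 1) | i. True}"

definition T_set :: "int set set \<Rightarrow> (int \<times> int) set" where
  "T_set P = {(i, i + 1) | i. i \<in> \<Union>P \<and> i + 1 \<in> \<Union>P
      \<and> (\<forall>x\<in>block_of P i. x \<le> i) \<and> (\<forall>x\<in>block_of P (i + 1). i + 1 \<le> x)}"

definition plus :: "int set set \<Rightarrow> int set set" where
  "plus P = (THE Q. partition_on (\<Union>P) Q \<and> arcs Q = (arcs P - S_set) \<union> T_set P)"

end

theory Submission
  imports Defs
begin

text \<open>Counting blocks by their maxima gives \<open>|X| = |Arc \<Lambda>| + |\<Lambda>|\<close> for every partition of a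
  finite set \<open>X\<close>. A partition is determined by its arc set, and every strictly increasing partial
  injection is the arc set of some partition; since \<open>(Arc \<Lambda> - S) \<union> T\<close> is such an injection,
  \<open>\<Lambda>\<^sup>+\<close> is well defined and \<open>|\<Lambda>\<^sup>+| = |X| - |Arc \<Lambda>| + |Arc \<Lambda> \<inter> S| - |T|\<close>.
  Now classify the \<open>2n - 2\<close> adjacent pairs \<open>i, i + 1\<close> of \<open>[\<plusminus>n]\<close> by whether an arc leaves \<open>i\<close>
  and whether an arc enters \<open>i + 1\<close>. Pairs with neither give \<open>T\<close>; in a noncrossing partition of
  type D, pairs with both give arcs \<open>(i, i + 1)\<close>, because the only admissible crossings are
  symmetric ones, which cannot straddle \<open>i, i + 1\<close>. Every arc source except possibly \<open>-1\<close>, and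
  every arc target except possibly \<open>1\<close>, lies in an adjacent pair, and by symmetry \<open>-1\<close> is a source
  iff \<open>1\<close> is a target. Inclusion-exclusion over the adjacent pairs then yields
  \<open>|\<Lambda>| + |\<Lambda>\<^sup>+| = 2n + 2\<close>, minus \<open>2\<close> if \<open>-1\<close> is not the maximum of its block.\<close>

definition block_arcs :: "int set \<Rightarrow> (int \<times> int) set" where
  "block_arcs B = {(i, j). i \<in> B \<and> j \<in> B \<and> i < j \<and> (\<forall>k\<in>B. i < k \<longrightarrow> j \<le> k)}"

lemma arcs_eq_UN_block_arcs: "arcs P = (\<Union>B\<in>P. block_arcs B)"
  unfolding arcs_def block_arcs_def by auto

lemma partition_on_block_unique:
  "partition_on X P \<Longrightarrow> B \<in> P \<Longrightarrow> B' \<in> P \<Longrightarrow> x \<in> B \<Longrightarrow> x \<in> B' \<Longrightarrow> B = B'"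
  unfolding partition_on_def disjoint_def by blast

lemma partition_on_finite_block: "partition_on X P \<Longrightarrow> finite X \<Longrightarrow> B \<in> P \<Longrightarrow> finite B"
  unfolding partition_on_def by (meson Union_upper finite_subset)

lemma arcs_less: "(i, j) \<in> arcs P \<Longrightarrow> i < j"
  unfolding arcs_def by auto

lemma arcs_subset: "partition_on X P \<Longrightarrow> arcs P \<subseteq> X \<times> X"
  unfolding arcs_def partition_on_def by auto

lemma arcs_same_block:
  "partition_on X P \<Longrightarrow> (i, j) \<in> arcs P \<Longrightarrow> B \<in> P \<Longrightarrow> i \<in> B \<or> j \<in> B \<Longrightarrow> i \<in> B \<and> j \<in> B"
  unfolding arcs_def by (auto dest: partition_on_block_unique)

lemma arcs_target_unique: "partition_on X P \<Longrightarrow> (i, j) \<in> arcs P \<Longrightarrow> (i, j') \<in> arcs P \<Longrightarrow> j = j'"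
  unfolding arcs_def by clarsimp (metis antisym partition_on_block_unique)

lemma arcs_source_unique: "partition_on X P \<Longrightarrow> (i, j) \<in> arcs P \<Longrightarrow> (i', j) \<in> arcs P \<Longrightarrow> i = i'"
  unfolding arcs_def by clarsimp (metis not_le order_less_le partition_on_block_unique)

lemma inj_on_fst_arcs: "partition_on X P \<Longrightarrow> inj_on fst (arcs P)"
  by (intro inj_onI) (metis arcs_target_unique prod.collapse)

lemma inj_on_snd_arcs: "partition_on X P \<Longrightarrow> inj_on snd (arcs P)"
  by (intro inj_onI) (metis arcs_source_unique prod.collapse)

lemma arc_from_le:
  assumes "partition_on X P" "finite X" "B \<in> P" "i \<in> B" "k \<in> B" "i < k"
  shows "\<exists>j. (i, j) \<in> arcs P \<and> j \<le> k"
proof -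
  define S where "S = {k \<in> B. i < k}"
  have "finite S" "k \<in> S"
    using partition_on_finite_block[OF assms(1-3)] assms(5,6) by (auto simp: S_def)
  then have "Min S \<in> S" "Min S \<le> k" "\<forall>x\<in>S. Min S \<le> x"
    by (auto intro: Min_in Min_le)
  then have "(i, Min S) \<in> block_arcs B"
    using assms(4) by (auto simp: S_def block_arcs_def)
  then show ?thesis
    using \<open>Min S \<le> k\<close> assms(3) arcs_eq_UN_block_arcs by blast
qed

lemma arc_to_ge:
  assumes "partition_on X P" "finite X" "B \<in> P" "i \<in> B" "k \<in> B" "k < i"
  shows "\<exists>j. (j, i) \<in> arcs P \<and> k \<le> j"
proof -
  define S where "S = {k \<in> B. k < i}"
  have "finite S" "k \<in> S"
    using partition_on_finite_block[OF assms(1-3)] assms(5,6) by (auto simp: S_def)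
  then have "Max S \<in> S" "k \<le> Max S" "\<forall>x\<in>S. x \<le> Max S"
    by (auto intro: Max_in Max_ge)
  then have "(Max S, i) \<in> block_arcs B"
    using assms(4) by (force simp: S_def block_arcs_def)
  then show ?thesis
    using \<open>k \<le> Max S\<close> assms(3) arcs_eq_UN_block_arcs by blast
qed

lemma arc_source_iff:
  assumes "partition_on X P" "finite X" "B \<in> P" "x \<in> B"
  shows "x \<in> fst ` arcs P \<longleftrightarrow> (\<exists>k\<in>B. x < k)"
proof
  assume "x \<in> fst ` arcs P"
  then obtain j where "(x, j) \<in> arcs P" by force
  then show "\<exists>k\<in>B. x < k"
    using arcs_same_block[OF assms(1) _ assms(3)] assms(4) arcs_less by blast
next
  assume "\<exists>k\<in>B. x < k"
  then show "x \<in> fst ` arcs P"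
    using arc_from_le[OF assms] by force
qed

lemma arc_target_iff:
  assumes "partition_on X P" "finite X" "B \<in> P" "x \<in> B"
  shows "x \<in> snd ` arcs P \<longleftrightarrow> (\<exists>k\<in>B. k < x)"
proof
  assume "x \<in> snd ` arcs P"
  then obtain j where "(j, x) \<in> arcs P" by force
  then show "\<exists>k\<in>B. k < x"
    using arcs_same_block[OF assms(1) _ assms(3)] assms(4) arcs_less by blast
next
  assume "\<exists>k\<in>B. k < x"
  then show "x \<in> snd ` arcs P"
    using arc_to_ge[OF assms] by force
qed

text \<open>Every block has exactly one element that is not the source of an arc, namely its maximum.\<close>

lemma card_partition_eq_card_arcs:
  assumes P: "partition_on X Q" and "finite X"
  shows "card X = card (arcs Q) + card Q"
proof -
  have block: "finite B" "B \<noteq> {}" "B \<subseteq> X" if "B \<in> Q" for B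
    using that P partition_on_finite_block[OF P \<open>finite X\<close>] by (auto simp: partition_on_def)
  have "bij_betw Max Q (X - fst ` arcs Q)"
  proof (rule bij_betwI')
    fix B B' assume "B \<in> Q" "B' \<in> Q"
    then show "(Max B = Max B') = (B = B')"
      using partition_on_block_unique[OF P] block Max_in by metis
  next
    fix B assume B: "B \<in> Q"
    then have "Max B \<in> B" "\<not> (\<exists>k\<in>B. Max B < k)"
      using block[OF B] by (auto simp: not_less)
    then show "Max B \<in> X - fst ` arcs Q"
      using arc_source_iff[OF P \<open>finite X\<close> B] block[OF B] by blast
  next
    fix i assume i: "i \<in> X - fst ` arcs Q"
    then obtain B where B: "B \<in> Q" "i \<in> B"
      using P by (auto simp: partition_on_def)
    then have "\<forall>k\<in>B. k \<le> i"
      using i arc_source_iff[OF P \<open>finite X\<close> B] by (auto simp: not_less)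
    then have "i = Max B"
      using B block[OF B(1)] by (intro Max_eqI[symmetric]) auto
    then show "\<exists>B\<in>Q. i = Max B" using B by blast
  qed
  then have "card Q = card (X - fst ` arcs Q)"
    by (rule bij_betw_same_card)
  moreover have "fst ` arcs Q \<subseteq> X"
    using arcs_subset[OF P] by auto
  ultimately show ?thesis
    using \<open>finite X\<close> card_image[OF inj_on_fst_arcs[OF P]]
    by (metis card_Diff_subset card_mono finite_subset le_add_diff_inverse)
qed

lemma arc_component_subset_block:
  assumes P: "partition_on X Q" and "B \<in> Q" "x \<in> B" "(x, y) \<in> (arcs Q \<union> (arcs Q)\<inverse>)\<^sup>*"
  shows "y \<in> B"
  using assms(4)
proof (induction rule: rtrancl_induct)
  case base
  then show ?case using \<open>x \<in> B\<close> .
next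
  case (step y z)
  then show ?case
    using arcs_same_block[OF P _ \<open>B \<in> Q\<close>] by blast
qed

lemma block_eq_arc_component:
  assumes P: "partition_on X Q" and "finite X" "B \<in> Q" "x \<in> B"
  shows "B = {y. (x, y) \<in> (arcs Q \<union> (arcs Q)\<inverse>)\<^sup>*}"
proof -
  let ?R = "(arcs Q \<union> (arcs Q)\<inverse>)\<^sup>*"
  have up: "(x, y) \<in> ?R" if "x \<in> B" "y \<in> B" "x < y" for x y
    using that
  proof (induction "nat (y - x)" arbitrary: x rule: less_induct)
    case less
    obtain j where j: "(x, j) \<in> arcs Q" "j \<le> y"
      using arc_from_le[OF P \<open>finite X\<close> \<open>B \<in> Q\<close> less.prems] by blast
    have "j \<in> B" "x < j"
      using arcs_same_block[OF P j(1) \<open>B \<in> Q\<close>] less.prems arcs_less[OF j(1)] by auto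
    have "(j, y) \<in> ?R"
    proof (cases "j = y")
      case False
      then show ?thesis
        using less.hyps[of j] \<open>j \<in> B\<close> \<open>x < j\<close> j(2) less.prems(2) by simp
    qed simp
    then show ?case
      using j(1) by (meson UnI1 converse_rtrancl_into_rtrancl)
  qed
  have "sym ?R"
    by (intro sym_rtrancl sym_Un_converse)
  show ?thesis
  proof (intro equalityI subsetI)
    fix y assume "y \<in> B"
    then have "(x, y) \<in> ?R \<or> (y, x) \<in> ?R"
      using up[OF \<open>x \<in> B\<close> \<open>y \<in> B\<close>] up[OF \<open>y \<in> B\<close> \<open>x \<in> B\<close>]
      by (cases x y rule: linorder_cases) simp_all
    then show "y \<in> {y. (x, y) \<in> ?R}"
      using \<open>sym ?R\<close> by (auto dest: symD)
  qed (use arc_component_subset_block[OF P \<open>B \<in> Q\<close> \<open>x \<in> B\<close>] in blast)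
qed

lemma partition_eq_if_arcs_eq:
  assumes "finite X" "partition_on X Q" "partition_on X Q'" "arcs Q = arcs Q'"
  shows "Q = Q'"
proof -
  have "Q1 \<subseteq> Q2" if Q1: "partition_on X Q1" and Q2: "partition_on X Q2"
    and eq: "arcs Q1 = arcs Q2" for Q1 Q2
  proof
    fix B assume B: "B \<in> Q1"
    then obtain x where x: "x \<in> B" "x \<in> X"
      using Q1 by (metis UnionI all_not_in_conv partition_on_def)
    then obtain B' where B': "B' \<in> Q2" "x \<in> B'"
      using Q2 by (auto simp: partition_on_def)
    have "B = B'"
      using block_eq_arc_component[OF Q1 \<open>finite X\<close> B x(1)]
        block_eq_arc_component[OF Q2 \<open>finite X\<close> B'] eq by simp
    then show "B \<in> Q2" using B' by simp
  qed
  then show ?thesis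
    using assms by (metis subset_antisym)
qed

lemma partition_insert_singleton:
  assumes "partition_on X Q" "b \<notin> X"
  shows "partition_on (insert b X) (insert {b} Q) \<and> arcs (insert {b} Q) = arcs Q"
proof -
  have "block_arcs {b} = {}"
    by (auto simp: block_arcs_def)
  then show ?thesis
    using assms unfolding partition_on_def disjoint_def by (auto simp: arcs_eq_UN_block_arcs)
qed

lemma partition_extend_block:
  assumes Q: "partition_on X Q" and "B \<in> Q" "p \<in> B" "\<forall>k\<in>B. k \<le> p" "\<forall>x\<in>X. x < b"
  shows "partition_on (insert b X) (insert (insert b B) (Q - {B}))
    \<and> arcs (insert (insert b B) (Q - {B})) = insert (p, b) (arcs Q)"
proof -
  have "B \<subseteq> X" "b \<notin> X"
    using Q \<open>B \<in> Q\<close> \<open>\<forall>x\<in>X. x < b\<close> by (auto simp: partition_on_def)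
  then have "partition_on (insert b X) (insert (insert b B) (Q - {B}))"
    using Q \<open>B \<in> Q\<close> unfolding partition_on_def disjoint_def by (auto; blast)
  moreover have "block_arcs (insert b B) = insert (p, b) (block_arcs B)"
    using assms(3-5) \<open>B \<subseteq> X\<close> unfolding block_arcs_def by (auto, force+)
  moreover have "arcs Q = block_arcs B \<union> (\<Union>C\<in>Q - {B}. block_arcs C)"
    using \<open>B \<in> Q\<close> unfolding arcs_eq_UN_block_arcs by blast
  ultimately show ?thesis
    by (auto simp: arcs_eq_UN_block_arcs)
qed

text \<open>Adding the elements in increasing order, each new element either starts a singleton block or
  is appended to the block of its arc source, which is then necessarily the maximum of that block.\<close>

lemma ex_partition_with_arcs:
  fixes X :: "int set"
  assumes "finite X" "A \<subseteq> X \<times> X" "\<forall>(i, j)\<in>A. i < j"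
    and "\<forall>i j j'. (i, j) \<in> A \<longrightarrow> (i, j') \<in> A \<longrightarrow> j = j'"
    and "\<forall>i i' j. (i, j) \<in> A \<longrightarrow> (i', j) \<in> A \<longrightarrow> i = i'"
  shows "\<exists>Q. partition_on X Q \<and> arcs Q = A"
  using assms
proof (induction X arbitrary: A rule: finite_linorder_max_induct)
  case empty
  then show ?case by (auto simp: arcs_def partition_on_empty)
next
  case (insert b X)
  define A0 where "A0 = {(i, j) \<in> A. j \<noteq> b}"
  have "A0 \<subseteq> X \<times> X"
  proof
    fix x assume "x \<in> A0"
    then obtain i j where "x = (i, j)" "(i, j) \<in> A" "j \<noteq> b"
      by (auto simp: A0_def)
    then show "x \<in> X \<times> X"
      using insert.prems(1,2) insert.hyps(2) by fastforce
  qed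
  moreover have "\<forall>(i, j)\<in>A0. i < j" "\<forall>i j j'. (i, j) \<in> A0 \<longrightarrow> (i, j') \<in> A0 \<longrightarrow> j = j'"
    "\<forall>i i' j. (i, j) \<in> A0 \<longrightarrow> (i', j) \<in> A0 \<longrightarrow> i = i'"
    using insert.prems(2-4) by (auto simp: A0_def)
  ultimately obtain Q0 where Q0: "partition_on X Q0" "arcs Q0 = A0"
    using insert.IH by blast
  show ?case
  proof (cases "\<exists>p. (p, b) \<in> A")
    case True
    then obtain p where pb: "(p, b) \<in> A" by blast
    have "p \<in> X" "A = insert (p, b) A0"
      using pb insert.prems(1,2,4) by (auto simp: A0_def)
    then obtain Bp where Bp: "Bp \<in> Q0" "p \<in> Bp"
      using Q0(1) by (auto simp: partition_on_def)
    have "\<forall>k\<in>Bp. k \<le> p"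
    proof (rule ccontr)
      assume "\<not> (\<forall>k\<in>Bp. k \<le> p)"
      then obtain j where "(p, j) \<in> arcs Q0"
        using arc_from_le[OF Q0(1) insert.hyps(1) Bp] by force
      then show False
        using pb insert.prems(3) Q0(2) by (auto simp: A0_def)
    qed
    then show ?thesis
      using partition_extend_block[OF Q0(1) Bp] insert.hyps(2) Q0(2) \<open>A = insert (p, b) A0\<close> by blast
  next
    case False
    then have "A = A0" by (auto simp: A0_def)
    then show ?thesis
      using partition_insert_singleton[OF Q0(1)] insert.hyps(2) Q0(2) by blast
  qed
qed

lemma block_of_in:
  assumes P: "partition_on X P" and "x \<in> X"
  shows "block_of P x \<in> P \<and> x \<in> block_of P x"
proof -
  obtain B where "B \<in> P" "x \<in> B"
    using assms by (auto simp: partition_on_def)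
  then have "\<exists>!B. B \<in> P \<and> x \<in> B"
    using partition_on_block_unique[OF P] by blast
  then show ?thesis
    unfolding block_of_def by (rule theI')
qed

lemma block_max_iff_not_arc_source:
  assumes P: "partition_on X P" and "finite X" "x \<in> X"
  shows "(\<exists>B\<in>P. x \<in> B \<and> (\<forall>y\<in>B. y \<le> x)) \<longleftrightarrow> x \<notin> fst ` arcs P"
  using arc_source_iff[OF P \<open>finite X\<close>] block_of_in[OF P \<open>x \<in> X\<close>] by (meson not_le)

definition adjacent :: "int set \<Rightarrow> int set" where
  "adjacent X = {i. i \<in> X \<and> i + 1 \<in> X}"

lemma T_set_eq:
  assumes P: "partition_on X P" and "finite X"
  shows "T_set P = (\<lambda>i. (i, i + 1)) ` {i \<in> adjacent X. i \<notin> fst ` arcs P \<and> i + 1 \<notin> snd ` arcs P}"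
proof -
  have UP: "\<Union>P = X"
    using P by (simp add: partition_on_def)
  have ends: "(\<forall>y\<in>block_of P x. y \<le> x) \<longleftrightarrow> x \<notin> fst ` arcs P"
    "(\<forall>y\<in>block_of P x. x \<le> y) \<longleftrightarrow> x \<notin> snd ` arcs P" if "x \<in> X" for x
    using arc_source_iff[OF P \<open>finite X\<close>] arc_target_iff[OF P \<open>finite X\<close>] block_of_in[OF P that]
    by (meson not_le)+
  show ?thesis
    unfolding T_set_def adjacent_def UP using ends by auto
qed

lemma T_set_subset_S_set: "T_set P \<subseteq> S_set"
  by (auto simp: T_set_def S_set_def)

lemma plus_partition:
  assumes P: "partition_on X P" and "finite X"
  shows "partition_on X (plus P) \<and> arcs (plus P) = (arcs P - S_set) \<union> T_set P"
proof -
  let ?A = "(arcs P - S_set) \<union> T_set P"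
  have arc_cases: "((i, j) \<in> arcs P \<and> i \<in> fst ` arcs P \<and> j \<in> snd ` arcs P)
      \<or> (j = i + 1 \<and> i \<in> X \<and> j \<in> X \<and> i \<notin> fst ` arcs P \<and> j \<notin> snd ` arcs P)"
    if ij: "(i, j) \<in> ?A" for i j
  proof -
    consider "(i, j) \<in> arcs P" | "(i, j) \<in> T_set P"
      using ij by blast
    then show ?thesis
    proof cases
      case 1
      then show ?thesis by (metis fst_conv snd_conv image_eqI)
    next
      case 2
      then show ?thesis using T_set_eq[OF assms] by (auto simp: adjacent_def)
    qed
  qed
  have "\<exists>Q. partition_on X Q \<and> arcs Q = ?A"
  proof (rule ex_partition_with_arcs[OF \<open>finite X\<close>])
    show "?A \<subseteq> X \<times> X" "\<forall>(i, j)\<in>?A. i < j"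
      using arc_cases arcs_subset[OF P] arcs_less by fastforce+
    show "\<forall>i j j'. (i, j) \<in> ?A \<longrightarrow> (i, j') \<in> ?A \<longrightarrow> j = j'"
    proof (intro allI impI)
      fix i j j' assume "(i, j) \<in> ?A" "(i, j') \<in> ?A"
      then show "j = j'"
        using arc_cases[of i j] arc_cases[of i j'] arcs_target_unique[OF P] by blast
    qed
    show "\<forall>i i' j. (i, j) \<in> ?A \<longrightarrow> (i', j) \<in> ?A \<longrightarrow> i = i'"
    proof (intro allI impI)
      fix i i' j assume "(i, j) \<in> ?A" "(i', j) \<in> ?A"
      then consider "(i, j) \<in> arcs P" "(i', j) \<in> arcs P" | "j = i + 1" "j = i' + 1"
        using arc_cases[of i j] arc_cases[of i' j] by blast
      then show "i = i'"
        using arcs_source_unique[OF P] by cases auto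
    qed
  qed
  then obtain Q where Q: "partition_on X Q" "arcs Q = ?A" by blast
  have UP: "\<Union>P = X"
    using P by (simp add: partition_on_def)
  have "plus P = Q"
    unfolding plus_def UP
    by (rule the_equality) (use Q partition_eq_if_arcs_eq[OF \<open>finite X\<close>] in auto)
  then show ?thesis using Q by simp
qed

lemma card_plus:
  assumes P: "partition_on X P" and "finite X"
  shows "int (card (plus P)) = int (card X) - int (card (arcs P))
    + int (card (arcs P \<inter> S_set)) - int (card (T_set P))"
proof -
  have "finite (arcs P)"
    using arcs_subset[OF P] \<open>finite X\<close> by (meson finite_SigmaI finite_subset)
  have "finite (T_set P)"
    using T_set_eq[OF assms] \<open>finite X\<close> by (simp add: adjacent_def)
  have "card (arcs (plus P)) = card (arcs P - S_set) + card (T_set P)"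
    using plus_partition[OF assms] T_set_subset_S_set[of P] \<open>finite (arcs P)\<close> \<open>finite (T_set P)\<close>
    by (metis Diff_disjoint card_Un_disjoint disjoint_iff finite_Diff subsetD)
  moreover have "int (card (arcs P - S_set)) = int (card (arcs P)) - int (card (arcs P \<inter> S_set))"
    using \<open>finite (arcs P)\<close>
    by (simp add: card_Diff_subset_Int card_mono of_nat_diff)
  moreover have "card X = card (arcs (plus P)) + card (plus P)"
    using card_partition_eq_card_arcs plus_partition[OF assms] \<open>finite X\<close> by blast
  ultimately show ?thesis by linarith
qed

lemma card_adjacent_arc_ends:
  assumes P: "partition_on X P" and "finite X"
    and adjacent_arc: "\<And>i j k. (i, k) \<in> arcs P \<Longrightarrow> (j, i + 1) \<in> arcs P \<Longrightarrow> (i, i + 1) \<in> arcs P"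
  shows "card {i \<in> adjacent X. i \<in> fst ` arcs P} + card {i \<in> adjacent X. i + 1 \<in> snd ` arcs P}
      + card (T_set P) = card (adjacent X) + card (arcs P \<inter> S_set)"
proof -
  define L where "L = {i \<in> adjacent X. i \<in> fst ` arcs P}"
  define R where "R = {i \<in> adjacent X. i + 1 \<in> snd ` arcs P}"
  define T where "T = {i \<in> adjacent X. i \<notin> fst ` arcs P \<and> i + 1 \<notin> snd ` arcs P}"
  have "finite (adjacent X)"
    using \<open>finite X\<close> by (simp add: adjacent_def)
  have inj: "inj_on (\<lambda>i::int. (i, i + 1)) A" for A
    by (auto intro: inj_onI)
  have "L \<inter> R = {i. (i, i + 1) \<in> arcs P}"
  proof (intro equalityI subsetI)
    fix i assume "i \<in> L \<inter> R"
    then obtain j k where "(i, k) \<in> arcs P" "(j, i + 1) \<in> arcs P"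
      by (auto simp: L_def R_def)
    then show "i \<in> {i. (i, i + 1) \<in> arcs P}"
      using adjacent_arc by blast
  next
    fix i assume "i \<in> {i. (i, i + 1) \<in> arcs P}"
    then show "i \<in> L \<inter> R"
      using arcs_subset[OF P] by (force simp: L_def R_def adjacent_def)
  qed
  then have "arcs P \<inter> S_set = (\<lambda>i. (i, i + 1)) ` (L \<inter> R)"
    by (auto simp: S_set_def)
  then have "card (arcs P \<inter> S_set) = card (L \<inter> R)"
    using card_image[OF inj] by simp
  moreover have "card (T_set P) = card T"
    unfolding T_set_eq[OF P \<open>finite X\<close>] T_def using card_image[OF inj] by simp
  moreover have "L \<union> R = adjacent X - T"
    by (auto simp: L_def R_def T_def)
  then have "card (L \<union> R) + card T = card (adjacent X)"
    using \<open>finite (adjacent X)\<close> by (simp add: T_def card_Diff_subset card_mono)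
  moreover have "card L + card R = card (L \<union> R) + card (L \<inter> R)"
    using \<open>finite (adjacent X)\<close> by (intro card_Un_Int) (auto simp: L_def R_def)
  ultimately show ?thesis
    by (simp add: L_def R_def)
qed

lemma NCD_adjacent_arc:
  assumes "P \<in> NCD n" "(i, k) \<in> arcs P" "(j, i + 1) \<in> arcs P"
  shows "(i, i + 1) \<in> arcs P"
proof (rule ccontr)
  assume "(i, i + 1) \<notin> arcs P"
  then have "j < i" "i + 1 < k"
    using assms(2,3) arcs_less[OF assms(2)] arcs_less[OF assms(3)] by (auto simp: order_less_le)
  moreover have "\<forall>i j k l. (i, k) \<in> arcs P \<and> (j, l) \<in> arcs P \<and> i < j \<and> j < k \<and> k < l
      \<longrightarrow> (i, k) = (- l, - j)"
    using assms(1) by (simp add: NCD_def)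
  ultimately have "(j, i + 1) = (- k, - i)"
    using assms(2,3) less_add_one by blast
  then have "2 * i + 1 = 0" by simp
  then show False by presburger
qed

lemma pm_eq: "pm n = {- int n..-1} \<union> {1..int n}"
  unfolding pm_def by auto

lemma finite_pm: "finite (pm n)"
  unfolding pm_eq by simp

lemma card_pm: "card (pm n) = 2 * n"
proof -
  have "card (pm n) = card {- int n..-1} + card {1..int n}"
    unfolding pm_eq by (rule card_Un_disjoint) auto
  then show ?thesis by simp
qed

lemma card_adjacent_pm: "card (adjacent (pm n)) = 2 * n - 2"
proof -
  have "adjacent (pm n) = {- int n..-2} \<union> {1..int n - 1}"
    by (auto simp: adjacent_def pm_def)
  moreover have "card ({- int n..-2} \<union> {1..int n - 1}) = card {- int n..-2} + card {1..int n - 1}"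
    by (rule card_Un_disjoint) auto
  ultimately show ?thesis by simp
qed

lemma int_card_Diff_singleton:
  assumes "finite A"
  shows "int (card (A - {x})) = int (card A) - (if x \<in> A then 1 else 0)"
proof (cases "x \<in> A")
  case True
  then have "int (card A) = 1 + int (card (A - {x}))"
    using card_Suc_Diff1[OF assms] of_nat_Suc by metis
  then show ?thesis
    unfolding if_P[OF True] by linarith
qed simp

lemma card_adjacent_arc_sources_pm:
  assumes P: "partition_on (pm n) P"
  shows "int (card {i \<in> adjacent (pm n). i \<in> fst ` arcs P})
    = int (card (arcs P)) - (if -1 \<in> fst ` arcs P then 1 else 0)"
proof -
  have "fst ` arcs P \<subseteq> pm n - {int n}"
    using arcs_subset[OF P] arcs_less by (fastforce simp: pm_def)
  then have "{i \<in> adjacent (pm n). i \<in> fst ` arcs P} = fst ` arcs P - {-1}"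
    by (auto simp: adjacent_def pm_def)
  moreover have "finite (fst ` arcs P)"
    using \<open>fst ` arcs P \<subseteq> pm n - {int n}\<close> finite_pm by (meson finite_Diff finite_subset)
  ultimately show ?thesis
    using card_image[OF inj_on_fst_arcs[OF P]] by (simp add: int_card_Diff_singleton)
qed

lemma card_adjacent_arc_targets_pm:
  assumes P: "partition_on (pm n) P"
  shows "int (card {i \<in> adjacent (pm n). i + 1 \<in> snd ` arcs P})
    = int (card (arcs P)) - (if 1 \<in> snd ` arcs P then 1 else 0)"
proof -
  have "snd ` arcs P \<subseteq> pm n - {- int n}"
    using arcs_subset[OF P] arcs_less by (fastforce simp: pm_def)
  have "{i \<in> adjacent (pm n). i + 1 \<in> snd ` arcs P} = (\<lambda>j. j - 1) ` (snd ` arcs P - {1})"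
  proof (intro equalityI subsetI)
    fix i assume "i \<in> {i \<in> adjacent (pm n). i + 1 \<in> snd ` arcs P}"
    then have "i + 1 \<in> snd ` arcs P - {1}"
      by (auto simp: adjacent_def pm_def)
    then show "i \<in> (\<lambda>j. j - 1) ` (snd ` arcs P - {1})"
      by (rule rev_image_eqI) simp
  next
    fix i assume "i \<in> (\<lambda>j. j - 1) ` (snd ` arcs P - {1})"
    then obtain j where "j \<in> snd ` arcs P" "j \<noteq> 1" "i = j - 1"
      by blast
    then show "i \<in> {i \<in> adjacent (pm n). i + 1 \<in> snd ` arcs P}"
      using \<open>snd ` arcs P \<subseteq> pm n - {- int n}\<close> by (auto simp: adjacent_def pm_def)
  qed
  moreover have "finite (snd ` arcs P)"
    using \<open>snd ` arcs P \<subseteq> pm n - {- int n}\<close> finite_pm by (meson finite_Diff finite_subset)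
  moreover have "inj_on (\<lambda>j::int. j - 1) A" for A
    by (auto intro: inj_onI)
  ultimately show ?thesis
    using card_image[OF inj_on_snd_arcs[OF P]] by (simp add: card_image int_card_Diff_singleton)
qed

lemma PiD_arc_source_minus_one_iff:
  assumes "P \<in> PiD n"
  shows "-1 \<in> fst ` arcs P \<longleftrightarrow> 1 \<in> snd ` arcs P"
proof -
  have "-1 \<in> fst ` arcs P \<longleftrightarrow> (\<exists>j. (-1, j) \<in> arcs P)"
    by force
  also have "\<dots> \<longleftrightarrow> (\<exists>j. (- j, 1) \<in> arcs P)"
  proof -
    have "(i, j) \<in> arcs P \<longleftrightarrow> (- j, - i) \<in> arcs P" for i j
      using assms unfolding PiD_def by blast
    from this[of "-1"] show ?thesis by simp
  qed
  also have "\<dots> \<longleftrightarrow> (\<exists>j. (j, 1) \<in> arcs P)"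
    by (metis minus_minus)
  also have "\<dots> \<longleftrightarrow> 1 \<in> snd ` arcs P"
    by force
  finally show ?thesis .
qed

lemma card_plus_add_card_NCD:
  assumes "n \<ge> 1" "P \<in> NCD n"
  shows "int (card (plus P)) + int (card P) = 2 * int n + 2 - (if -1 \<in> fst ` arcs P then 2 else 0)"
proof -
  have "P \<in> PiD n" and P: "partition_on (pm n) P"
    using assms(2) by (simp_all add: NCD_def PiD_def)
  have "int (card (adjacent (pm n))) = 2 * int n - 2"
    using card_adjacent_pm[of n] assms(1) by simp
  moreover have "card {i \<in> adjacent (pm n). i \<in> fst ` arcs P}
      + card {i \<in> adjacent (pm n). i + 1 \<in> snd ` arcs P} + card (T_set P)
    = card (adjacent (pm n)) + card (arcs P \<inter> S_set)"
    by (rule card_adjacent_arc_ends[OF P finite_pm]) (rule NCD_adjacent_arc[OF assms(2)])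
  moreover have "card (pm n) = card (arcs P) + card P"
    using card_partition_eq_card_arcs[OF P finite_pm] .
  ultimately show ?thesis
    using card_plus[OF P finite_pm] card_pm[of n] card_adjacent_arc_sources_pm[OF P]
      card_adjacent_arc_targets_pm[OF P] PiD_arc_source_minus_one_iff[OF \<open>P \<in> PiD n\<close>]
    by (simp split: if_splits)
qed

theorem corollary5p2:
  fixes n :: nat and P :: "int set set"
  assumes "n \<ge> 1" and "P \<in> NCD n"
  shows "((\<exists>B\<in>P. -1 \<in> B \<and> (\<forall>x\<in>B. x \<le> -1)) \<longrightarrow>
            int (card (plus P)) = 2 * int n + 2 - int (card P))
       \<and> (\<not> (\<exists>B\<in>P. -1 \<in> B \<and> (\<forall>x\<in>B. x \<le> -1)) \<longrightarrow>
            int (card (plus P)) = 2 * int n - int (card P))"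
proof -
  have P: "partition_on (pm n) P"
    using assms(2) by (simp add: NCD_def PiD_def)
  have "-1 \<in> pm n"
    using assms(1) by (simp add: pm_def)
  then have "(\<exists>B\<in>P. -1 \<in> B \<and> (\<forall>x\<in>B. x \<le> -1)) \<longleftrightarrow> -1 \<notin> fst ` arcs P"
    by (rule block_max_iff_not_arc_source[OF P finite_pm])
  then show ?thesis
    using card_plus_add_card_NCD[OF assms] by (cases "-1 \<in> fst ` arcs P") auto
qed

end
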